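(* Under the standing setup below, as $n \to +\infty$, \[ a_{-n} u_n + a_{-n+1} u_{n+1} = \frac{\pi}{4} + O\!\left( \frac{1}{D_{n-1}^2} \right). \] In particular, $\lim_{n \to +\infty} \left( a_{-n} u_n + a_{-n+1} u_{n+1} \right) = \dfrac{\pi}{4}$.
   Context: Standing setup: $a_0, a_1 \in \mathbb{Z}$ and $u_0 > u_1 > 0$ are rational numbers with $a_0 \arctan u_0 + a_1 \arctan u_1 = \pi/4$. Let $\alpha := \arctan u_0 / \arctan u_1$ (which is $>1$ and irrational), with infinite simple continued fraction expansion $\alpha = [q_0; q_1, q_2, \dots]$, $q_i \in \mathbb{N}$. The numbers $u_n$ ($n \in \mathbb{N}_0$) are the positive reals with the given $u_0,u_1$ and $\arctan u_n = q_n \arctan u_{n+1} + \arctan u_{n+2}$ for all $n \in \mathbb{N}_0$. The integers $a_{-n}$ for $n \geq 1$ are defined recursively by $a_{-n-1} := q_n a_{-n} + a_{-n+1}$ for all $n \in \mathbb{N}_0$. The sequences $N_k, D_k$ ($k \ge -2$) are defined by $N_{-2}=0$, $N_{-1}=1$, $D_{-2}=1$, $D_{-1}=0$, and $N_k = q_k N_{k-1} + N_{k-2}$, $D_k = q_k D_{k-1} + D_{k-2}$ for $k \in \mathbb{N}_0$; thus $N_n/D_n = [q_0; q_1, \dots, q_n]$ in lowest terms for $n \ge 0$. *)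

theory Defs
  imports "HOL-Analysis.Analysis" "HOL-Library.Landau_Symbols"
begin

fun cf_rem :: "real \<Rightarrow> nat \<Rightarrow> real" where
  "cf_rem x 0 = x"
| "cf_rem x (Suc n) = 1 / (cf_rem x n - of_int \<lfloor>cf_rem x n\<rfloor>)"

definition cf_q :: "real \<Rightarrow> nat \<Rightarrow> nat" where
  "cf_q x n = nat \<lfloor>cf_rem x n\<rfloor>"

(* theta n = arctan u_n, with arctan u_n = q_n arctan u_{n+1} + arctan u_{n+2} *)
fun theta :: "real \<Rightarrow> real \<Rightarrow> (nat \<Rightarrow> nat) \<Rightarrow> nat \<Rightarrow> real" where
  "theta u0 u1 q 0 = arctan u0"
| "theta u0 u1 q (Suc 0) = arctan u1"
| "theta u0 u1 q (Suc (Suc n)) = theta u0 u1 q n - real (q n) * theta u0 u1 q (Suc n)"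

definition useq :: "real \<Rightarrow> real \<Rightarrow> (nat \<Rightarrow> nat) \<Rightarrow> nat \<Rightarrow> real" where
  "useq u0 u1 q n = tan (theta u0 u1 q n)"

(* aneg a0 a1 q k = a_{1-k}; so a_{-n} = aneg (n+1), a_{-n+1} = aneg n *)
fun aneg :: "int \<Rightarrow> int \<Rightarrow> (nat \<Rightarrow> nat) \<Rightarrow> nat \<Rightarrow> int" where
  "aneg a0 a1 q 0 = a1"
| "aneg a0 a1 q (Suc 0) = a0"
| "aneg a0 a1 q (Suc (Suc n)) = int (q n) * aneg a0 a1 q (Suc n) + aneg a0 a1 q n"

(* Dsh q k = D_{k-2}; so D_{-2} = Dsh 0 = 1, D_{-1} = Dsh 1 = 0, D_{n-1} = Dsh (n+1) *)
fun Dsh :: "(nat \<Rightarrow> nat) \<Rightarrow> nat \<Rightarrow> int" where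
  "Dsh q 0 = 1"
| "Dsh q (Suc 0) = 0"
| "Dsh q (Suc (Suc k)) = int (q k) * Dsh q (Suc k) + Dsh q k"

end

(* Write theta_n = arctan u_n. For every solution x of x_(k+2) = q_k x_(k+1) + x_k the quantity
   x_(n+1) theta_n + x_n theta_(n+1) does not depend on n: it is pi/4 for the a's and theta_1 for
   the D's. The ratio alpha = theta_0 / theta_1 is irrational, because arctan u / pi is irrational
   for rational u > 0 other than 1 (a Niven-type argument). Hence the recursion for theta is the
   Euclidean algorithm of the continued fraction of alpha: all theta_n are positive and decreasing,
   D_(n-1) theta_n <= theta_1, and |a_(-n)| theta_n stays bounded. The error is therefore
   a_(-n) (tan theta_n - theta_n) + a_(-n+1) (tan theta_(n+1) - theta_(n+1)) = O(theta_n^2),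
   which is O(1 / D_(n-1)^2). *)

theory Submission
  imports Defs "HOL-Real_Asymp.Real_Asymp"
begin

(* The Lucas sequence V_n(P, Q) = a^n + b^n, where a, b are the roots of X^2 - P X + Q. *)
fun lucas_V :: "int \<Rightarrow> int \<Rightarrow> nat \<Rightarrow> int" where
  "lucas_V P Q 0 = 2"
| "lucas_V P Q (Suc 0) = P"
| "lucas_V P Q (Suc (Suc n)) = P * lucas_V P Q (Suc n) - Q * lucas_V P Q n"

lemma cos_Suc_Suc_mult:
  "cos (real (Suc (Suc n)) * x) = 2 * cos x * cos (real (Suc n) * x) - cos (real n * x)"
proof -
  have "real (Suc (Suc n)) * x = real (Suc n) * x + x" "real n * x = real (Suc n) * x - x"
    by (simp_all add: algebra_simps)
  then show ?thesis
    by (simp only: cos_add cos_diff) (simp add: algebra_simps)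
qed

lemma lucas_V_cos:
  assumes "of_int P = 2 * r * cos x" and "of_int Q = r\<^sup>2"
  shows "real_of_int (lucas_V P Q n) = 2 * r ^ n * cos (real n * x)"
proof (induction n rule: induct_nat_012)
  case (ge2 n)
  have "real_of_int (lucas_V P Q (Suc (Suc n)))
      = 2 * r ^ Suc (Suc n) * (2 * cos x * cos (real (Suc n) * x) - cos (real n * x))"
    using ge2 by (simp add: assms algebra_simps power2_eq_square)
  then show ?case
    by (simp only: cos_Suc_Suc_mult)
qed (use assms in simp_all)

lemma lucas_V_cong_power: "Q dvd lucas_V P Q (Suc n) - P ^ Suc n"
proof (induction n)
  case (Suc n)
  have "lucas_V P Q (Suc (Suc n)) - P ^ Suc (Suc n)
      = P * (lucas_V P Q (Suc n) - P ^ Suc n) - Q * lucas_V P Q n"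
    by (simp add: algebra_simps)
  then show ?case
    by (simp only:) (intro dvd_diff dvd_mult Suc.IH dvd_triv_left)
qed simp

lemma two_cos_in_Ints:
  assumes "2 * cos x \<in> \<rat>" and "N > 0" and "cos (real N * x) = 1"
  shows "2 * cos x \<in> \<int>"
proof -
  obtain p q where "q > 0" and "coprime p q" and pq: "2 * cos x = of_int p / of_int q"
    using Rats_cases'[OF assms(1)] by blast
  obtain n where N: "N = Suc n"
    using assms(2) gr0_implies_Suc by blast
  have "real_of_int p = 2 * of_int q * cos x"
    using pq \<open>q > 0\<close> by (simp add: field_simps)
  \<comment> \<open>V_N(p, q^2) = 2 q^N is congruent to p^N modulo q, so q divides p^N.\<close>
  then have "real_of_int (lucas_V p (q\<^sup>2) N) = 2 * of_int q ^ N"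
    using lucas_V_cos[of p "of_int q" x "q\<^sup>2" N] assms(3) by simp
  then have "lucas_V p (q\<^sup>2) N = 2 * q ^ N"
    by (metis of_int_eq_iff of_int_mult of_int_numeral of_int_power)
  then have "q dvd lucas_V p (q\<^sup>2) N"
    using N by simp
  moreover have "q dvd lucas_V p (q\<^sup>2) N - p ^ N"
    using lucas_V_cong_power[of "q\<^sup>2" p n] N dvd_trans[of q "q\<^sup>2"] by (simp add: power2_eq_square)
  ultimately have "q dvd lucas_V p (q\<^sup>2) N - (lucas_V p (q\<^sup>2) N - p ^ N)"
    by (rule dvd_diff)
  then have "q dvd p ^ N"
    by simp
  then have "q = 1"
    using \<open>coprime p q\<close> \<open>q > 0\<close> coprime_common_divisor[of "p ^ N" q q] by auto
  with pq show ?thesis by simp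
qed

lemma Rats_square_neq_3:
  fixes u :: real
  assumes "u \<in> \<rat>"
  shows "u\<^sup>2 \<noteq> 3"
proof
  assume u: "u\<^sup>2 = 3"
  then have "algebraic_int \<bar>u\<bar>"
    using algebraic_int_sqrt[of 3] by (metis algebraic_int_numeral real_sqrt_abs)
  then have "u \<in> \<int>"
    using assms by (simp add: rational_algebraic_int_is_int)
  then obtain k where "u = of_int k"
    by (elim Ints_cases)
  with u have k: "k\<^sup>2 = 3"
    by (metis of_int_eq_iff of_int_numeral of_int_power)
  consider "\<bar>k\<bar> \<le> 1" | "2 \<le> \<bar>k\<bar>"
    by linarith
  then show False
  proof cases
    case 1
    then show False
      using k abs_square_le_1[of k] by simp
  next
    case 2
    then have "2\<^sup>2 \<le> \<bar>k\<bar>\<^sup>2"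
      by (rule power_mono) simp
    then show False
      using k by simp
  qed
qed

lemma arctan_eq_1_if_Rats_div_pi:
  fixes u :: real
  assumes "u \<in> \<rat>" and "u > 0" and "arctan u / pi \<in> \<rat>"
  shows "u = 1"
proof -
  obtain k m where "m > 0" and km: "arctan u / pi = of_int k / of_int m"
    using Rats_cases'[OF assms(3)] by blast
  define x where "x = 2 * arctan u"
  have pos: "1 + u\<^sup>2 > 0"
    by (metis add_pos_nonneg zero_less_one zero_le_power2)
  have "(cos (arctan u))\<^sup>2 = 1 / (1 + u\<^sup>2)"
    by (simp add: cos_arctan power_divide add_pos_nonneg)
  then have cos_x: "2 * cos x = 2 * (1 - u\<^sup>2) / (1 + u\<^sup>2)"
    unfolding x_def cos_double_cos using pos by (simp add: field_simps)
  have "real (nat m) * x = 2 * pi * of_int k"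
    using km \<open>m > 0\<close> by (simp add: x_def field_simps)
  then have "cos (real (nat m) * x) = 1"
    by (simp add: cos_int_2pin)
  moreover have "2 * cos x \<in> \<rat>"
    unfolding cos_x using assms(1) by simp
  ultimately have "2 * cos x \<in> \<int>"
    using two_cos_in_Ints[of x "nat m"] \<open>m > 0\<close> by simp
  then obtain z where z: "2 * cos x = of_int z"
    by (elim Ints_cases)
  have "\<bar>2 * cos x\<bar> \<le> 2"
    using abs_cos_le_one[of x] by (simp add: abs_mult)
  with z have "z \<in> {-2, -1, 0, 1, 2}"
    by auto
  moreover have eq: "2 * (1 - u\<^sup>2) = of_int z * (1 + u\<^sup>2)"
    using z cos_x pos by (simp add: field_simps)
  moreover have "(1 / u)\<^sup>2 \<noteq> 3"
    using assms(1) by (intro Rats_square_neq_3) simp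
  \<comment> \<open>z = -1 gives u^2 = 3, z = 1 gives (1/u)^2 = 3, and z = 2, z = -2 are impossible.\<close>
  ultimately show ?thesis
    using Rats_square_neq_3[OF assms(1)] \<open>u > 0\<close>
    by (auto simp: field_simps power2_eq_1_iff)
qed

lemma arctan_ratio_not_Rats:
  fixes a0 a1 :: int and u0 u1 :: real
  assumes "u0 \<in> \<rat>" and "u1 \<in> \<rat>" and "u0 > u1" and "u1 > 0"
    and "of_int a0 * arctan u0 + of_int a1 * arctan u1 = pi / 4"
  shows "arctan u0 / arctan u1 \<notin> \<rat>"
proof
  assume ratio: "arctan u0 / arctan u1 \<in> \<rat>"
  have "0 < arctan u1"
    using assms(4) arctan_less_iff[of 0 u1] by simp
  define c where "c = of_int a0 * (arctan u0 / arctan u1) + of_int a1"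
  have pi_eq: "pi = 4 * arctan u1 * c"
    using assms(5) \<open>0 < arctan u1\<close> by (simp add: c_def field_simps)
  have "arctan u1 / pi = 1 / (4 * c)"
    by (subst pi_eq) (use \<open>0 < arctan u1\<close> in simp)
  moreover have "c \<in> \<rat>"
    unfolding c_def by (intro Rats_add Rats_mult Rats_of_int ratio)
  ultimately have u1_quot: "arctan u1 / pi \<in> \<rat>"
    by simp
  have "arctan u0 / pi = arctan u0 / arctan u1 * (arctan u1 / pi)"
    using \<open>0 < arctan u1\<close> by simp
  then have "arctan u0 / pi \<in> \<rat>"
    using ratio u1_quot by (metis Rats_mult)
  then have "u0 = 1" and "u1 = 1"
    using arctan_eq_1_if_Rats_div_pi assms(1-4) u1_quot by auto
  with assms(3) show False
    by simp
qed

lemma cf_rem_not_Rats: "x \<notin> \<rat> \<Longrightarrow> cf_rem x n \<notin> \<rat>"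
proof (induction n)
  case (Suc n)
  have "cf_rem x n = of_int \<lfloor>cf_rem x n\<rfloor> + 1 / cf_rem x (Suc n)"
    by simp
  with Suc show ?case
    by (metis Rats_add Rats_divide Rats_1 Rats_of_int)
qed simp

lemma cf_rem_Suc_gt_1:
  assumes "x \<notin> \<rat>"
  shows "cf_rem x (Suc n) > 1"
proof -
  have "cf_rem x n \<noteq> of_int \<lfloor>cf_rem x n\<rfloor>"
    using cf_rem_not_Rats[OF assms] by (metis Rats_of_int)
  then have "0 < cf_rem x n - of_int \<lfloor>cf_rem x n\<rfloor>" "cf_rem x n - of_int \<lfloor>cf_rem x n\<rfloor> < 1"
    by linarith+
  then show ?thesis
    by simp
qed

lemma cf_q_ge_1:
  assumes "x > 1" and "x \<notin> \<rat>"
  shows "cf_q x n \<ge> 1"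
proof -
  have "cf_rem x n \<ge> 1"
    using assms cf_rem_Suc_gt_1[of x] by (cases n) (auto intro: less_imp_le)
  then have "1 \<le> \<lfloor>cf_rem x n\<rfloor>"
    by (simp add: le_floor_iff)
  then show ?thesis
    unfolding cf_q_def by linarith
qed

lemma theta_pos_cf_rem:
  fixes u0 u1 :: real
  defines "\<alpha> \<equiv> arctan u0 / arctan u1"
  assumes "0 < arctan u0" and "0 < arctan u1" and "\<alpha> \<notin> \<rat>"
  shows "0 < theta u0 u1 (cf_q \<alpha>) n \<and> 0 < theta u0 u1 (cf_q \<alpha>) (Suc n)
    \<and> cf_rem \<alpha> n = theta u0 u1 (cf_q \<alpha>) n / theta u0 u1 (cf_q \<alpha>) (Suc n)"
proof (induction n)
  case 0
  then show ?case
    using assms by simp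
next
  case (Suc n)
  define t where "t = theta u0 u1 (cf_q \<alpha>)"
  define y where "y = cf_rem \<alpha> n"
  have t: "0 < t n" "0 < t (Suc n)" and y: "y = t n / t (Suc n)"
    using Suc by (simp_all add: t_def y_def)
  have "y \<noteq> of_int \<lfloor>y\<rfloor>"
    using cf_rem_not_Rats[OF assms(4)] by (metis Rats_of_int y_def)
  then have frac_pos: "0 < y - of_int \<lfloor>y\<rfloor>"
    by linarith
  have "0 < y"
    using t y by simp
  then have q_n: "real (cf_q \<alpha> n) = of_int \<lfloor>y\<rfloor>"
    by (simp add: cf_q_def y_def)
  have t_n: "t n = y * t (Suc n)"
    using t y by simp
  have "t (Suc (Suc n)) = t n - real (cf_q \<alpha> n) * t (Suc n)"
    by (simp add: t_def)
  also have "\<dots> = t (Suc n) * (y - of_int \<lfloor>y\<rfloor>)"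
    unfolding q_n t_n by (simp add: algebra_simps)
  finally have t_Suc_Suc: "t (Suc (Suc n)) = t (Suc n) * (y - of_int \<lfloor>y\<rfloor>)" .
  have "cf_rem \<alpha> (Suc n) = 1 / (y - of_int \<lfloor>y\<rfloor>)"
    by (simp add: y_def)
  also have "\<dots> = t (Suc n) / t (Suc (Suc n))"
    using t_Suc_Suc t by simp
  finally show ?case
    using t t_Suc_Suc frac_pos by (simp add: t_def)
qed

lemma theta_Suc_le:
  assumes "\<And>n. 0 < theta u0 u1 q n" and "1 \<le> q n"
  shows "theta u0 u1 q (Suc n) \<le> theta u0 u1 q n"
proof -
  have "theta u0 u1 q (Suc n) \<le> real (q n) * theta u0 u1 q (Suc n)"
    using assms by simp
  also have "\<dots> < theta u0 u1 q n"
    using assms(1)[of "Suc (Suc n)"] by simp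
  finally show ?thesis
    by simp
qed

lemma aneg_theta_invariant:
  "of_int (aneg a0 a1 q (Suc n)) * theta u0 u1 q n + of_int (aneg a0 a1 q n) * theta u0 u1 q (Suc n)
    = of_int a0 * arctan u0 + of_int a1 * arctan u1"
  by (induction n) (simp_all add: algebra_simps)

lemma abs_aneg_le: "\<bar>aneg a0 a1 q n\<bar> \<le> aneg \<bar>a0\<bar> \<bar>a1\<bar> q n"
proof (induction n rule: induct_nat_012)
  case (ge2 n)
  have "\<bar>aneg a0 a1 q (Suc (Suc n))\<bar> \<le> int (q n) * \<bar>aneg a0 a1 q (Suc n)\<bar> + \<bar>aneg a0 a1 q n\<bar>"
    by (simp add: abs_mult order_trans[OF abs_triangle_ineq])
  also have "\<dots> \<le> aneg \<bar>a0\<bar> \<bar>a1\<bar> q (Suc (Suc n))"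
    using ge2 by (simp add: add_mono mult_left_mono)
  finally show ?case .
qed simp_all

lemma abs_aneg_theta_le:
  assumes "\<And>n. 0 < theta u0 u1 q n"
  shows "\<bar>of_int (aneg a0 a1 q (Suc n))\<bar> * theta u0 u1 q n
      + \<bar>of_int (aneg a0 a1 q n)\<bar> * theta u0 u1 q (Suc n)
    \<le> \<bar>of_int a0\<bar> * arctan u0 + \<bar>of_int a1\<bar> * arctan u1"
proof -
  have "\<bar>real_of_int (aneg a0 a1 q k)\<bar> \<le> of_int (aneg \<bar>a0\<bar> \<bar>a1\<bar> q k)" for k
    using abs_aneg_le by (metis of_int_abs of_int_le_iff)
  then have "\<bar>of_int (aneg a0 a1 q (Suc n))\<bar> * theta u0 u1 q n
      + \<bar>of_int (aneg a0 a1 q n)\<bar> * theta u0 u1 q (Suc n)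
    \<le> of_int (aneg \<bar>a0\<bar> \<bar>a1\<bar> q (Suc n)) * theta u0 u1 q n
      + of_int (aneg \<bar>a0\<bar> \<bar>a1\<bar> q n) * theta u0 u1 q (Suc n)"
    using assms by (intro add_mono mult_right_mono) (auto intro: less_imp_le)
  then show ?thesis
    by (simp add: aneg_theta_invariant)
qed

lemma Dsh_eq_aneg: "Dsh q = aneg 0 1 q"
proof
  fix n show "Dsh q n = aneg 0 1 q n"
    by (induction n rule: induct_nat_012) simp_all
qed

lemma Dsh_ge:
  assumes "\<And>k. 1 \<le> q k"
  shows "1 \<le> Dsh q (Suc (Suc n)) \<and> int n \<le> Dsh q (Suc (Suc n))"
proof (induction n rule: induct_nat_012)
  case 1
  then show ?case
    using assms[of 1] by simp
next
  case (ge2 n)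
  have "Dsh q (Suc (Suc (Suc n))) + Dsh q (Suc (Suc n)) \<le> Dsh q (Suc (Suc (Suc (Suc n))))"
    using assms[of "Suc (Suc n)"] ge2 by (simp add: mult_right_mono[of 1, simplified])
  with ge2 show ?case
    by linarith
qed simp

lemma Dsh_tendsto_at_top:
  assumes "\<And>k. 1 \<le> q k"
  shows "filterlim (\<lambda>n. real_of_int (Dsh q n)) at_top sequentially"
proof -
  have "filterlim (\<lambda>n. real_of_int (Dsh q (Suc (Suc n)))) at_top sequentially"
  proof (rule filterlim_at_top_mono[OF filterlim_real_sequentially], rule always_eventually, rule allI)
    fix n
    show "real n \<le> real_of_int (Dsh q (Suc (Suc n)))"
      using Dsh_ge[of q n] assms by (metis of_int_le_iff of_int_of_nat_eq)
  qed
  then have "filterlim (\<lambda>n. real_of_int (Dsh q (Suc n))) at_top sequentially"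
    by (rule filterlim_sequentially_Suc[THEN iffD1])
  then show ?thesis
    by (rule filterlim_sequentially_Suc[THEN iffD1])
qed

lemma tan_minus_bigo: "(\<lambda>x::real. tan x - x) \<in> O[at_right 0](\<lambda>x. x ^ 3)"
  unfolding tan_def by real_asymp

lemma bigo_tendsto_0:
  fixes f g :: "'a \<Rightarrow> real"
  assumes "f \<in> O[F](g)" and "(g \<longlongrightarrow> 0) F"
  shows "(f \<longlongrightarrow> 0) F"
proof -
  have "g \<in> o[F](\<lambda>_. 1)"
    using assms(2) by (intro smalloI_tendsto) simp_all
  with assms(1) have "f \<in> o[F](\<lambda>_. 1)"
    by (rule landau_o.big_small_trans)
  then show ?thesis
    using smalloD_tendsto[of f F "\<lambda>_. 1"] by simp
qed

lemma tan_error_bigo: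
  fixes t A :: "'a \<Rightarrow> real"
  assumes t: "filterlim t (at_right 0) F" and A: "eventually (\<lambda>x. \<bar>A x\<bar> * t x \<le> K) F"
  shows "(\<lambda>x. A x * (tan (t x) - t x)) \<in> O[F](\<lambda>x. t x ^ 2)"
proof -
  have "(\<lambda>x. tan (t x) - t x) \<in> O[F](\<lambda>x. t x ^ 3)"
    using landau_o.big.compose[OF tan_minus_bigo t] .
  then have "(\<lambda>x. A x * (tan (t x) - t x)) \<in> O[F](\<lambda>x. A x * t x ^ 3)"
    by (rule landau_o.big.mult_left)
  also have "(\<lambda>x. A x * t x ^ 3) = (\<lambda>x. (A x * t x) * t x ^ 2)"
    by (simp add: eval_nat_numeral mult.assoc)
  also have "(\<lambda>x. (A x * t x) * t x ^ 2) \<in> O[F](\<lambda>x. 1 * t x ^ 2)"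
  proof (intro landau_o.big.mult_right bigoI)
    show "eventually (\<lambda>x. norm (A x * t x) \<le> K * norm (1::real)) F"
      using A eventually_compose_filterlim[OF eventually_at_right_less t]
      by eventually_elim (simp add: abs_mult)
  qed
  finally show ?thesis
    by simp
qed

lemma theta_bigo_inverse_Dsh:
  assumes pos: "\<And>n. 0 < theta u0 u1 q n" and "\<And>n. 1 \<le> q n"
  shows "theta u0 u1 q \<in> O(\<lambda>n. 1 / real_of_int (Dsh q (Suc n)))"
proof (rule bigoI)
  have "filterlim (\<lambda>n. real_of_int (Dsh q (Suc n))) at_top sequentially"
    using Dsh_tendsto_at_top[OF assms(2)] by (rule filterlim_sequentially_Suc[THEN iffD2])
  then have "eventually (\<lambda>n. 0 < real_of_int (Dsh q (Suc n))) sequentially"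
    by (rule eventually_compose_filterlim[OF eventually_gt_at_top])
  then show "eventually (\<lambda>n. norm (theta u0 u1 q n)
      \<le> arctan u1 * norm (1 / real_of_int (Dsh q (Suc n)))) sequentially"
  proof (rule eventually_mono)
    fix n
    assume D_pos: "0 < real_of_int (Dsh q (Suc n))"
    have "\<bar>real_of_int (Dsh q (Suc n))\<bar> * theta u0 u1 q n
        + \<bar>real_of_int (Dsh q n)\<bar> * theta u0 u1 q (Suc n) \<le> arctan u1"
      using abs_aneg_theta_le[OF pos, of 0 1 n] by (simp add: Dsh_eq_aneg)
    moreover have "0 \<le> \<bar>real_of_int (Dsh q n)\<bar> * theta u0 u1 q (Suc n)"
      using pos[of "Suc n"] by simp
    ultimately have "\<bar>real_of_int (Dsh q (Suc n))\<bar> * theta u0 u1 q n \<le> arctan u1"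
      by linarith
    then have "theta u0 u1 q n \<le> arctan u1 / real_of_int (Dsh q (Suc n))"
      using D_pos by (simp add: pos_le_divide_eq mult.commute)
    then show "norm (theta u0 u1 q n) \<le> arctan u1 * norm (1 / real_of_int (Dsh q (Suc n)))"
      using pos[of n] D_pos by simp
  qed
qed

lemma inverse_Dsh_tendsto_0:
  assumes "\<And>n. 1 \<le> q n"
  shows "(\<lambda>n. 1 / real_of_int (Dsh q (Suc n))) \<longlonglongrightarrow> 0"
proof (rule tendsto_divide_0[OF tendsto_const filterlim_at_top_imp_at_infinity])
  show "filterlim (\<lambda>n. real_of_int (Dsh q (Suc n))) at_top sequentially"
    using Dsh_tendsto_at_top[OF assms] by (rule filterlim_sequentially_Suc[THEN iffD2])
qed

lemma theta_tendsto_0: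
  assumes "\<And>n. 0 < theta u0 u1 q n" and "\<And>n. 1 \<le> q n"
  shows "theta u0 u1 q \<longlonglongrightarrow> 0"
  using theta_bigo_inverse_Dsh[OF assms] inverse_Dsh_tendsto_0[OF assms(2)] by (rule bigo_tendsto_0)

lemma aneg_useq_error_bigo:
  assumes pos: "\<And>n. 0 < theta u0 u1 q n" and q: "\<And>n. 1 \<le> q n"
  shows "(\<lambda>n. of_int (aneg a0 a1 q (Suc n)) * useq u0 u1 q n + of_int (aneg a0 a1 q n) * useq u0 u1 q (Suc n)
      - (of_int a0 * arctan u0 + of_int a1 * arctan u1)) \<in> O(\<lambda>n. (theta u0 u1 q n)\<^sup>2)"
proof -
  define t where "t = theta u0 u1 q"
  define A where "A n = real_of_int (aneg a0 a1 q n)" for n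
  define K where "K = \<bar>real_of_int a0\<bar> * arctan u0 + \<bar>real_of_int a1\<bar> * arctan u1"
  have nonneg: "0 \<le> \<bar>A k\<bar> * t m" for k m
    using pos[of m] by (simp add: t_def)
  have A_bounds: "\<bar>A (Suc n)\<bar> * t n \<le> K" "\<bar>A n\<bar> * t (Suc n) \<le> K" for n
    using abs_aneg_theta_le[OF pos, of a0 a1 n] nonneg[of n "Suc n"] nonneg[of "Suc n" n]
    unfolding A_def K_def t_def by linarith+
  have t_lim: "filterlim t (at_right 0) sequentially"
    using theta_tendsto_0[OF pos q] pos by (auto simp: t_def intro: tendsto_imp_filterlim_at_right)
  have first_term: "(\<lambda>n. A (Suc n) * (tan (t n) - t n)) \<in> O(\<lambda>n. (t n)\<^sup>2)"
    using A_bounds(1) by (intro tan_error_bigo[OF t_lim] always_eventually allI)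
  have "(\<lambda>n. A n * (tan (t (Suc n)) - t (Suc n))) \<in> O(\<lambda>n. (t (Suc n))\<^sup>2)"
    using t_lim A_bounds(2)
    by (intro tan_error_bigo always_eventually allI) (simp_all add: filterlim_sequentially_Suc)
  also have "(\<lambda>n. (t (Suc n))\<^sup>2) \<in> O(\<lambda>n. (t n)\<^sup>2)"
  proof (intro bigoI[of _ 1] always_eventually allI)
    fix n
    have "(t (Suc n))\<^sup>2 \<le> (t n)\<^sup>2"
      using theta_Suc_le[OF pos q, of n] pos[of "Suc n"] by (intro power_mono) (simp_all add: t_def)
    then show "norm ((t (Suc n))\<^sup>2) \<le> 1 * norm ((t n)\<^sup>2)"
      by simp
  qed
  finally have second_term: "(\<lambda>n. A n * (tan (t (Suc n)) - t (Suc n))) \<in> O(\<lambda>n. (t n)\<^sup>2)" .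
  have "(\<lambda>n. A (Suc n) * (tan (t n) - t n) + A n * (tan (t (Suc n)) - t (Suc n)))
      \<in> O(\<lambda>n. (t n)\<^sup>2)"
    using first_term second_term by (rule sum_in_bigo(1))
  moreover have "A (Suc n) * (tan (t n) - t n) + A n * (tan (t (Suc n)) - t (Suc n))
      = A (Suc n) * useq u0 u1 q n + A n * useq u0 u1 q (Suc n)
        - (of_int a0 * arctan u0 + of_int a1 * arctan u1)" for n
    using aneg_theta_invariant[of a0 a1 q n u0 u1] by (simp add: A_def t_def useq_def algebra_simps)
  ultimately show ?thesis
    by (simp add: A_def t_def)
qed

theorem corollary3:
  fixes a0 a1 :: int and u0 u1 :: real
  assumes "u0 \<in> \<rat>" and "u1 \<in> \<rat>"
    and "u0 > u1" and "u1 > 0"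
    and "real_of_int a0 * arctan u0 + real_of_int a1 * arctan u1 = pi / 4"
  defines "q \<equiv> cf_q (arctan u0 / arctan u1)"
  shows "((\<lambda>n. real_of_int (aneg a0 a1 q (Suc n)) * useq u0 u1 q n
               + real_of_int (aneg a0 a1 q n) * useq u0 u1 q (Suc n) - pi / 4)
           \<in> O(\<lambda>n. 1 / (real_of_int (Dsh q (Suc n)))\<^sup>2)
       \<and> (\<lambda>n. real_of_int (aneg a0 a1 q (Suc n)) * useq u0 u1 q n
               + real_of_int (aneg a0 a1 q n) * useq u0 u1 q (Suc n)) \<longlonglongrightarrow> pi / 4)"
proof -
  have "0 < arctan u1" and "arctan u1 < arctan u0"
    using assms(3,4) arctan_less_iff[of 0 u1] by (simp_all add: arctan_less_iff)
  moreover have irrational: "arctan u0 / arctan u1 \<notin> \<rat>"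
    using arctan_ratio_not_Rats[OF assms(1-5)] .
  ultimately have pos: "0 < theta u0 u1 q n" and q_ge_1: "1 \<le> q n" for n
    using theta_pos_cf_rem[of u0 u1 n] cf_q_ge_1[of "arctan u0 / arctan u1" n] assms(3,4)
    by (auto simp: q_def)
  let ?E = "\<lambda>n. real_of_int (aneg a0 a1 q (Suc n)) * useq u0 u1 q n
               + real_of_int (aneg a0 a1 q n) * useq u0 u1 q (Suc n) - pi / 4"
  have "?E \<in> O(\<lambda>n. (theta u0 u1 q n)\<^sup>2)"
    using aneg_useq_error_bigo[OF pos q_ge_1, of a0 a1] assms(5) by simp
  also have "(\<lambda>n. (theta u0 u1 q n)\<^sup>2) \<in> O(\<lambda>n. (1 / real_of_int (Dsh q (Suc n)))\<^sup>2)"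
    by (intro landau_o.big_power theta_bigo_inverse_Dsh pos q_ge_1)
  finally have bigo: "?E \<in> O(\<lambda>n. 1 / (real_of_int (Dsh q (Suc n)))\<^sup>2)"
    by (simp add: power_one_over)
  have "(\<lambda>n. 1 / (real_of_int (Dsh q (Suc n)))\<^sup>2) \<longlonglongrightarrow> 0"
    using tendsto_power[OF inverse_Dsh_tendsto_0[OF q_ge_1], where n = 2] by (simp add: power_one_over)
  then have "?E \<longlonglongrightarrow> 0"
    by (rule bigo_tendsto_0[OF bigo])
  then show ?thesis
    using bigo tendsto_add[OF \<open>?E \<longlonglongrightarrow> 0\<close> tendsto_const[of "pi / 4"]] by simp
qed

end
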